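(* For every sentence $\alpha$ there is a sentence $\gamma$ in assignment normal form such that $\alpha\leftrightarrow\gamma$ is a theorem of $\mathbf{LEL}$.
   Context: Fix a nonempty finite set $\mathbf{A}$ of agents, a countable set $\mathbf{X}$ of variables disjoint from $\mathbf{A}$, and a countable set $\mathbf{P}$ of predicate letters. Formulas and free variables: $\phi ::= p_x \mid \top \mid \neg\phi \mid (\phi\wedge\phi) \mid [x:=a]\phi \mid \mathsf{K}_X\alpha$ ($p\in\mathbf{P}$, $x\in\mathbf{X}$, $a\in\mathbf{A}$, $X\subseteq\mathbf{X}$ finite possibly empty, $\alpha$ with no free variables), $FV(p_x)=\{x\}$, $FV(\top)=\emptyset$, $FV(\neg\phi)=FV(\phi)$, $FV(\phi\wedge\psi)=FV(\phi)\cup FV(\psi)$, $FV([x:=a]\phi)=FV(\phi)\setminus\{x\}$, $FV(\mathsf{K}_X\alpha)=X$. Sentences have no free variables. $\bot:=\neg\top$, $\langle x:=a\rangle\phi:=\neg[x:=a]\neg\phi$. $\phi[y/x]$ replaces free occurrences of $x$ by $y$ (including in index sets of $\mathsf{K}_X$); admissible if $x$ has no free occurrence within the scope of any $[y:=b]$. $[\vec{x}:=\vec{a}]\phi$ abbreviates $[x_1:=a_1]\cdots[x_n:=a_n]\phi$ for equal-length strings $\vec x,\vec a$, $\mathsf{K}_{\vec x}:=\mathsf{K}_{\{x_1,\dots,x_n\}}$, $\mathsf{K}_x:=\mathsf{K}_{\{x\}}$, $\{\vec a\}=\{a_1,\dots,a_n\}$. $\mathbf{LEL}$: axioms — propositional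 tautologies; $\mathsf{K}_X(\alpha\to\beta)\to(\mathsf{K}_X\alpha\to\mathsf{K}_X\beta)$; $\mathsf{K}_X\alpha\to\mathsf{K}_Y\alpha$ ($X\subseteq Y$); $[x:=a](\phi\to\psi)\to([x:=a]\phi\to[x:=a]\psi)$; $\langle x:=a\rangle\phi\to[x:=a]\phi$; $\phi\to[x:=a]\phi$ ($x\notin FV(\phi)$); $[y:=a]([x:=a]\phi\to\phi[y/x])$ ($\phi[y/x]$ admissible); $[x:=a][y:=b]\phi\to[y:=b][x:=a]\phi$ ($x\neq y$); $\bigwedge_{a\in\mathbf{A}}[x:=a]\phi\to\phi$; $\mathsf{K}_X\alpha\to\alpha$; $[\vec{x}:=\vec{a}](\neg\mathsf{K}_{\vec{x}}\alpha\to\mathsf{K}_{\vec{x}}[\vec{x}:=\vec{a}]\neg\mathsf{K}_{\vec{x}}\alpha)$; $[x:=a]\mathsf{K}_{x}\langle x:=a\rangle\top$; $[x:=a](p_x\to\mathsf{K}_{x}[x:=a]p_x)$; $[\vec{x}:=\vec{a}](\bigwedge_{b\in B}[x:=b]\bot\to\mathsf{K}_{\vec{x}}\bigwedge_{b\in B}[x:=b]\bot)$ with $B=\mathbf{A}\setminus\{\vec a\}$. Rules: modus ponens; from sentence $\alpha$ infer $\mathsf{K}_\emptyset\alpha$; from $\phi$ infer $[x:=a]\phi$. ($\alpha,\beta$ sentences; $\phi,\psi$ formulas.) The sentences in assignment normal form are generated by $\gamma ::= [x:=a]p_x \mid [x:=a]\bot \mid \top \mid \neg\gamma \mid (\gamma\wedge\gamma)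 \mid [\vec{x}:=\vec{a}]\mathsf{K}_{\vec{x}}\gamma$ (with $x\in\mathbf{X}$, $a\in\mathbf{A}$, $p\in\mathbf{P}$, and $\vec x,\vec a$ strings of variables and agents of equal length). *)

theory Defs
  imports "HOL-Library.Countable"
begin

text \<open>Agents: a finite (nonempty, as every type is) type 'a. Variables 'x and predicate
letters 'p: countable types. Pred p x is p_x, Asg x a phi is [x:=a]phi, K X alpha is K_X alpha.\<close>

datatype ('a, 'x, 'p) fm =
    Pred 'p 'x
  | Top
  | Neg "('a, 'x, 'p) fm"
  | Conj "('a, 'x, 'p) fm" "('a, 'x, 'p) fm"
  | Asg 'x 'a "('a, 'x, 'p) fm"
  | K "'x set" "('a, 'x, 'p) fm"

fun FV :: "('a, 'x, 'p) fm \<Rightarrow> 'x set" where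
  "FV (Pred p x) = {x}"
| "FV Top = {}"
| "FV (Neg \<phi>) = FV \<phi>"
| "FV (Conj \<phi> \<psi>) = FV \<phi> \<union> FV \<psi>"
| "FV (Asg x a \<phi>) = FV \<phi> - {x}"
| "FV (K X \<alpha>) = X"

fun wf :: "('a, 'x, 'p) fm \<Rightarrow> bool" where
  "wf (Pred p x) = True"
| "wf Top = True"
| "wf (Neg \<phi>) = wf \<phi>"
| "wf (Conj \<phi> \<psi>) = (wf \<phi> \<and> wf \<psi>)"
| "wf (Asg x a \<phi>) = wf \<phi>"
| "wf (K X \<alpha>) = (finite X \<and> wf \<alpha> \<and> FV \<alpha> = {})"

definition sentence :: "('a, 'x, 'p) fm \<Rightarrow> bool" where
  "sentence \<phi> \<longleftrightarrow> wf \<phi> \<and> FV \<phi> = {}"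

definition Bot :: "('a, 'x, 'p) fm" where "Bot = Neg Top"
definition Imp :: "('a, 'x, 'p) fm \<Rightarrow> ('a, 'x, 'p) fm \<Rightarrow> ('a, 'x, 'p) fm" where
  "Imp \<phi> \<psi> = Neg (Conj \<phi> (Neg \<psi>))"
definition Iff :: "('a, 'x, 'p) fm \<Rightarrow> ('a, 'x, 'p) fm \<Rightarrow> ('a, 'x, 'p) fm" where
  "Iff \<phi> \<psi> = Conj (Imp \<phi> \<psi>) (Imp \<psi> \<phi>)"
definition Dia :: "'x \<Rightarrow> 'a \<Rightarrow> ('a, 'x, 'p) fm \<Rightarrow> ('a, 'x, 'p) fm" where
  "Dia x a \<phi> = Neg (Asg x a (Neg \<phi>))"

fun Asgs :: "'x list \<Rightarrow> 'a list \<Rightarrow> ('a, 'x, 'p) fm \<Rightarrow> ('a, 'x, 'p) fm" where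
  "Asgs (x # xs) (a # as) \<phi> = Asg x a (Asgs xs as \<phi>)"
| "Asgs _ _ \<phi> = \<phi>"

fun Conjs :: "('a, 'x, 'p) fm list \<Rightarrow> ('a, 'x, 'p) fm" where
  "Conjs [] = Top"
| "Conjs (\<phi> # \<phi>s) = Conj \<phi> (Conjs \<phi>s)"

fun subst :: "('a, 'x, 'p) fm \<Rightarrow> 'x \<Rightarrow> 'x \<Rightarrow> ('a, 'x, 'p) fm" where
  "subst (Pred p z) y x = Pred p (if z = x then y else z)"
| "subst Top y x = Top"
| "subst (Neg \<phi>) y x = Neg (subst \<phi> y x)"
| "subst (Conj \<phi> \<psi>) y x = Conj (subst \<phi> y x) (subst \<psi> y x)"
| "subst (Asg z a \<phi>) y x = (if z = x then Asg z a \<phi> else Asg z a (subst \<phi> y x))"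
| "subst (K X \<alpha>) y x = K (if x \<in> X then insert y (X - {x}) else X) \<alpha>"

text \<open>phi[y/x] is admissible iff x has no free occurrence within the scope of any [y:=b].\<close>
fun admissible :: "('a, 'x, 'p) fm \<Rightarrow> 'x \<Rightarrow> 'x \<Rightarrow> bool" where
  "admissible (Pred p z) y x = True"
| "admissible Top y x = True"
| "admissible (Neg \<phi>) y x = admissible \<phi> y x"
| "admissible (Conj \<phi> \<psi>) y x = (admissible \<phi> y x \<and> admissible \<psi> y x)"
| "admissible (Asg z a \<phi>) y x =
     (z = x \<or> (if z = y then x \<notin> FV \<phi> else admissible \<phi> y x))"
| "admissible (K X \<alpha>) y x = True"

fun peval :: "(('a, 'x, 'p) fm \<Rightarrow> bool) \<Rightarrow> ('a, 'x, 'p) fm \<Rightarrow> bool" where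
  "peval v Top = True"
| "peval v (Neg \<phi>) = (\<not> peval v \<phi>)"
| "peval v (Conj \<phi> \<psi>) = (peval v \<phi> \<and> peval v \<psi>)"
| "peval v \<phi> = v \<phi>"

definition taut :: "('a, 'x, 'p) fm \<Rightarrow> bool" where
  "taut \<phi> \<longleftrightarrow> (\<forall>v. peval v \<phi>)"

inductive LEL :: "('a::finite, 'x::countable, 'p::countable) fm \<Rightarrow> bool" where
  Taut: "wf \<phi> \<Longrightarrow> taut \<phi> \<Longrightarrow> LEL \<phi>"
| K_dist: "finite X \<Longrightarrow> sentence \<alpha> \<Longrightarrow> sentence \<beta> \<Longrightarrow>
     LEL (Imp (K X (Imp \<alpha> \<beta>)) (Imp (K X \<alpha>) (K X \<beta>)))"
| K_mono: "finite Y \<Longrightarrow> X \<subseteq> Y \<Longrightarrow> sentence \<alpha> \<Longrightarrow> LEL (Imp (K X \<alpha>) (K Y \<alpha>))"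
| Asg_dist: "wf \<phi> \<Longrightarrow> wf \<psi> \<Longrightarrow>
     LEL (Imp (Asg x a (Imp \<phi> \<psi>)) (Imp (Asg x a \<phi>) (Asg x a \<psi>)))"
| Asg_func: "wf \<phi> \<Longrightarrow> LEL (Imp (Dia x a \<phi>) (Asg x a \<phi>))"
| Asg_vac: "wf \<phi> \<Longrightarrow> x \<notin> FV \<phi> \<Longrightarrow> LEL (Imp \<phi> (Asg x a \<phi>))"
| Asg_subst: "wf \<phi> \<Longrightarrow> admissible \<phi> y x \<Longrightarrow>
     LEL (Asg y a (Imp (Asg x a \<phi>) (subst \<phi> y x)))"
| Asg_comm: "wf \<phi> \<Longrightarrow> x \<noteq> y \<Longrightarrow>
     LEL (Imp (Asg x a (Asg y b \<phi>)) (Asg y b (Asg x a \<phi>)))"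
| Asg_all: "wf \<phi> \<Longrightarrow> set as = UNIV \<Longrightarrow>
     LEL (Imp (Conjs (map (\<lambda>a. Asg x a \<phi>) as)) \<phi>)"
| K_T: "finite X \<Longrightarrow> sentence \<alpha> \<Longrightarrow> LEL (Imp (K X \<alpha>) \<alpha>)"
| K_neg: "length xs = length as \<Longrightarrow> sentence \<alpha> \<Longrightarrow>
     LEL (Asgs xs as (Imp (Neg (K (set xs) \<alpha>))
                          (K (set xs) (Asgs xs as (Neg (K (set xs) \<alpha>))))))"
| K_self: "LEL (Asg x a (K {x} (Dia x a Top)))"
| K_pred: "LEL (Asg x a (Imp (Pred p x) (K {x} (Asg x a (Pred p x)))))"
| K_absent: "length xs = length as \<Longrightarrow> set bs = UNIV - set as \<Longrightarrow>
     LEL (Asgs xs as (Imp (Conjs (map (\<lambda>b. Asg x b Bot) bs))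
                          (K (set xs) (Conjs (map (\<lambda>b. Asg x b Bot) bs)))))"
| MP: "LEL (Imp \<phi> \<psi>) \<Longrightarrow> LEL \<phi> \<Longrightarrow> LEL \<psi>"
| Nec_K: "sentence \<alpha> \<Longrightarrow> LEL \<alpha> \<Longrightarrow> LEL (K {} \<alpha>)"
| Nec_Asg: "LEL \<phi> \<Longrightarrow> LEL (Asg x a \<phi>)"

inductive anf :: "('a, 'x, 'p) fm \<Rightarrow> bool" where
  "anf (Asg x a (Pred p x))"
| "anf (Asg x a Bot)"
| "anf Top"
| "anf \<gamma> \<Longrightarrow> anf (Neg \<gamma>)"
| "anf \<gamma> \<Longrightarrow> anf \<delta> \<Longrightarrow> anf (Conj \<gamma> \<delta>)"
| "length xs = length as \<Longrightarrow> anf \<gamma> \<Longrightarrow> anf (Asgs xs as (K (set xs) \<gamma>))"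

end

theory Submission
  imports Defs
begin

text \<open>Every assignment operator [x:=a] is a normal modality that is partial-functional. Hence
it commutes with conjunction, and with negation up to the condition [x:=a]\<bottom> that a cannot be
assigned to x; on formulas in which x is not free it is vacuous up to the same condition. A prefix
of assignments whose variables cover the free variables of \<phi> can therefore be pushed through the
Boolean structure of \<phi>, leaving behind a disjunction of such blocking conditions. At an atom p_x
only the innermost assignment to x survives, and at K_X \<gamma> exactly the assignments to variables
of X survive; since these cover X, they form a prefix [xs:=as] with set xs = X, which is what
assignment normal form allows. Induction on \<alpha>, accumulating the assignments passed on the way
into the prefix, yields the normal form.\<close>

definition Or :: "('a, 'x, 'p) fm \<Rightarrow> ('a, 'x, 'p) fm \<Rightarrow> ('a, 'x, 'p) fm" where
  "Or \<phi> \<psi> = Neg (Conj (Neg \<phi>) (Neg \<psi>))"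

fun Asg_list :: "('x \<times> 'a) list \<Rightarrow> ('a, 'x, 'p) fm \<Rightarrow> ('a, 'x, 'p) fm" where
  "Asg_list [] \<phi> = \<phi>"
| "Asg_list ((x, a) # \<sigma>) \<phi> = Asg x a (Asg_list \<sigma> \<phi>)"

text \<open>Some assignment of \<sigma> is impossible, so that the prefix \<sigma> holds vacuously.\<close>

fun Blocked :: "('x \<times> 'a) list \<Rightarrow> ('a, 'x, 'p) fm" where
  "Blocked [] = Bot"
| "Blocked ((x, a) # \<sigma>) = Or (Asg x a Bot) (Blocked \<sigma>)"

lemma peval_derived_connectives [simp]:
  "peval v (Imp \<phi> \<psi>) = (peval v \<phi> \<longrightarrow> peval v \<psi>)"
  "peval v (Iff \<phi> \<psi>) = (peval v \<phi> \<longleftrightarrow> peval v \<psi>)"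
  "peval v (Or \<phi> \<psi>) = (peval v \<phi> \<or> peval v \<psi>)"
  "peval v Bot = False"
  by (auto simp: Imp_def Iff_def Or_def Bot_def)

lemma wf_derived_connectives [simp]:
  "wf (Imp \<phi> \<psi>) = (wf \<phi> \<and> wf \<psi>)"
  "wf (Iff \<phi> \<psi>) = (wf \<phi> \<and> wf \<psi>)"
  "wf (Or \<phi> \<psi>) = (wf \<phi> \<and> wf \<psi>)"
  "wf Bot"
  "wf (Dia x a \<phi>) = wf \<phi>"
  by (auto simp: Imp_def Iff_def Or_def Bot_def Dia_def)

lemma FV_derived_connectives [simp]:
  "FV (Imp \<phi> \<psi>) = FV \<phi> \<union> FV \<psi>"
  "FV (Iff \<phi> \<psi>) = FV \<phi> \<union> FV \<psi>"
  "FV (Or \<phi> \<psi>) = FV \<phi> \<union> FV \<psi>"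
  "FV Bot = {}"
  "FV (Dia x a \<phi>) = FV \<phi> - {x}"
  by (auto simp: Imp_def Iff_def Or_def Bot_def Dia_def)

lemma wf_Asg_list [simp]: "wf (Asg_list \<sigma> \<phi>) = wf \<phi>"
  by (induction \<sigma> \<phi> rule: Asg_list.induct) auto

lemma FV_Asg_list [simp]: "FV (Asg_list \<sigma> \<phi>) = FV \<phi> - fst ` set \<sigma>"
  by (induction \<sigma> \<phi> rule: Asg_list.induct) auto

lemma Asg_list_append: "Asg_list (\<sigma> @ \<tau>) \<phi> = Asg_list \<sigma> (Asg_list \<tau> \<phi>)"
  by (induction \<sigma> \<phi> rule: Asg_list.induct) auto

lemma Asgs_eq_Asg_list: "length xs = length as \<Longrightarrow> Asgs xs as \<phi> = Asg_list (zip xs as) \<phi>"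
  by (induction xs as \<phi> rule: Asgs.induct) auto

lemma wf_Asgs [simp]: "wf (Asgs xs as \<phi>) = wf \<phi>"
  by (induction xs as \<phi> rule: Asgs.induct) auto

lemma FV_Asgs [simp]: "length xs = length as \<Longrightarrow> FV (Asgs xs as \<phi>) = FV \<phi> - set xs"
  by (induction xs as \<phi> rule: Asgs.induct) auto

lemma wf_Conjs [simp]: "wf (Conjs \<phi>s) = (\<forall>\<phi>\<in>set \<phi>s. wf \<phi>)"
  by (induction \<phi>s) auto

lemma FV_Conjs [simp]: "FV (Conjs \<phi>s) = (\<Union>\<phi>\<in>set \<phi>s. FV \<phi>)"
  by (induction \<phi>s) auto

lemma wf_subst [simp]: "wf \<phi> \<Longrightarrow> wf (subst \<phi> y x)"
  by (induction \<phi> y x rule: subst.induct) auto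

lemma wf_Blocked [simp]: "wf (Blocked \<sigma>)"
  and FV_Blocked [simp]: "FV (Blocked \<sigma>) = {}"
  by (induction \<sigma> rule: Blocked.induct) auto

lemma anf_sentence: "anf \<gamma> \<Longrightarrow> sentence \<gamma>"
  unfolding sentence_def by (induction rule: anf.induct) (auto simp: Bot_def)

lemma anf_Bot: "anf Bot"
  unfolding Bot_def by (intro anf.intros)

lemma anf_Or: "anf \<gamma> \<Longrightarrow> anf \<delta> \<Longrightarrow> anf (Or \<gamma> \<delta>)"
  unfolding Or_def by (intro anf.intros)

lemma anf_Blocked: "anf (Blocked \<sigma>)"
  by (induction \<sigma> rule: Blocked.induct) (auto intro: anf_Or anf_Bot anf.intros)

lemma anf_Asg_list_K: "anf \<gamma> \<Longrightarrow> anf (Asg_list \<sigma> (K (fst ` set \<sigma>) \<gamma>))"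
  using anf.intros(6)[of "map fst \<sigma>" "map snd \<sigma>" \<gamma>] by (simp add: Asgs_eq_Asg_list zip_map_fst_snd)

subsection \<open>Propositional reasoning in LEL\<close>

definition LEL_equiv ::
    "('a::finite, 'x::countable, 'p::countable) fm \<Rightarrow> ('a, 'x, 'p) fm \<Rightarrow> bool"
    (infix "\<approx>" 50) where
  "\<phi> \<approx> \<psi> \<longleftrightarrow> LEL (Iff \<phi> \<psi>)"

lemma LEL_wf: "LEL \<phi> \<Longrightarrow> wf \<phi>"
  by (induction rule: LEL.induct) (auto simp: sentence_def intro: finite_subset)

lemma LEL_tautology: "wf \<psi> \<Longrightarrow> (\<And>v. peval v \<psi>) \<Longrightarrow> LEL \<psi>"
  by (auto intro: LEL.Taut simp: taut_def)

lemma LEL_tautological_consequence: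
  assumes "\<forall>\<phi>\<in>set \<phi>s. LEL \<phi>" and "wf \<psi>" and "\<And>v. \<forall>\<phi>\<in>set \<phi>s. peval v \<phi> \<Longrightarrow> peval v \<psi>"
  shows "LEL \<psi>"
  using assms
proof (induction \<phi>s arbitrary: \<psi>)
  case Nil
  then show ?case by (auto intro: LEL_tautology)
next
  case (Cons \<phi> \<phi>s)
  have "LEL (Imp \<phi> \<psi>)"
    using Cons by (intro Cons.IH) (auto dest: LEL_wf)
  with Cons.prems(1) show ?case by (auto intro: LEL.MP)
qed

text \<open>Applied by \<open>rule\<close> to chained facts, this selects the variant with as many premises as
there are facts.\<close>

lemma LEL_propositional:
  "LEL \<phi>\<^sub>1 \<Longrightarrow> wf \<psi> \<Longrightarrow> (\<And>v. peval v \<phi>\<^sub>1 \<Longrightarrow> peval v \<psi>) \<Longrightarrow> LEL \<psi>"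
  "LEL \<phi>\<^sub>1 \<Longrightarrow> LEL \<phi>\<^sub>2 \<Longrightarrow> wf \<psi> \<Longrightarrow>
     (\<And>v. peval v \<phi>\<^sub>1 \<Longrightarrow> peval v \<phi>\<^sub>2 \<Longrightarrow> peval v \<psi>) \<Longrightarrow> LEL \<psi>"
  "LEL \<phi>\<^sub>1 \<Longrightarrow> LEL \<phi>\<^sub>2 \<Longrightarrow> LEL \<phi>\<^sub>3 \<Longrightarrow> wf \<psi> \<Longrightarrow>
     (\<And>v. peval v \<phi>\<^sub>1 \<Longrightarrow> peval v \<phi>\<^sub>2 \<Longrightarrow> peval v \<phi>\<^sub>3 \<Longrightarrow> peval v \<psi>) \<Longrightarrow> LEL \<psi>"
  "LEL \<phi>\<^sub>1 \<Longrightarrow> LEL \<phi>\<^sub>2 \<Longrightarrow> LEL \<phi>\<^sub>3 \<Longrightarrow> LEL \<phi>\<^sub>4 \<Longrightarrow> wf \<psi> \<Longrightarrow>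
     (\<And>v. peval v \<phi>\<^sub>1 \<Longrightarrow> peval v \<phi>\<^sub>2 \<Longrightarrow> peval v \<phi>\<^sub>3 \<Longrightarrow> peval v \<phi>\<^sub>4 \<Longrightarrow> peval v \<psi>) \<Longrightarrow>
     LEL \<psi>"
  "LEL \<phi>\<^sub>1 \<Longrightarrow> LEL \<phi>\<^sub>2 \<Longrightarrow> LEL \<phi>\<^sub>3 \<Longrightarrow> LEL \<phi>\<^sub>4 \<Longrightarrow> LEL \<phi>\<^sub>5 \<Longrightarrow> wf \<psi> \<Longrightarrow>
     (\<And>v. peval v \<phi>\<^sub>1 \<Longrightarrow> peval v \<phi>\<^sub>2 \<Longrightarrow> peval v \<phi>\<^sub>3 \<Longrightarrow> peval v \<phi>\<^sub>4 \<Longrightarrow> peval v \<phi>\<^sub>5 \<Longrightarrow>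
       peval v \<psi>) \<Longrightarrow> LEL \<psi>"
  subgoal by (rule LEL_tautological_consequence[of "[\<phi>\<^sub>1]"]) auto
  subgoal by (rule LEL_tautological_consequence[of "[\<phi>\<^sub>1, \<phi>\<^sub>2]"]) auto
  subgoal by (rule LEL_tautological_consequence[of "[\<phi>\<^sub>1, \<phi>\<^sub>2, \<phi>\<^sub>3]"]) auto
  subgoal by (rule LEL_tautological_consequence[of "[\<phi>\<^sub>1, \<phi>\<^sub>2, \<phi>\<^sub>3, \<phi>\<^sub>4]"]) auto
  subgoal by (rule LEL_tautological_consequence[of "[\<phi>\<^sub>1, \<phi>\<^sub>2, \<phi>\<^sub>3, \<phi>\<^sub>4, \<phi>\<^sub>5]"]) auto
  done

lemma equiv_by_tautology:
  "wf \<phi> \<Longrightarrow> wf \<psi> \<Longrightarrow> (\<And>v. peval v \<phi> \<longleftrightarrow> peval v \<psi>) \<Longrightarrow> \<phi> \<approx> \<psi>"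
  unfolding LEL_equiv_def by (intro LEL_tautology) auto

lemma equiv_refl: "wf \<phi> \<Longrightarrow> \<phi> \<approx> \<phi>"
  by (rule equiv_by_tautology) auto

lemma equiv_trans [trans]:
  assumes "\<phi> \<approx> \<psi>" and "\<psi> \<approx> \<chi>"
  shows "\<phi> \<approx> \<chi>"
  using assms unfolding LEL_equiv_def
  by (rule LEL_propositional) (use assms in \<open>auto simp: LEL_equiv_def dest: LEL_wf\<close>)

lemma equivI:
  assumes "LEL (Imp \<phi> \<psi>)" and "LEL (Imp \<psi> \<phi>)"
  shows "\<phi> \<approx> \<psi>"
  using assms unfolding LEL_equiv_def
  by (rule LEL_propositional) (use assms in \<open>auto simp: LEL_equiv_def dest: LEL_wf\<close>)

lemma equivD:
  assumes "\<phi> \<approx> \<psi>"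
  shows "LEL (Imp \<phi> \<psi>)" and "LEL (Imp \<psi> \<phi>)"
  using assms unfolding LEL_equiv_def
  by (rule LEL_propositional; use assms in \<open>auto simp: LEL_equiv_def dest: LEL_wf\<close>)+

lemma Neg_cong:
  assumes "\<phi> \<approx> \<psi>"
  shows "Neg \<phi> \<approx> Neg \<psi>"
  using assms unfolding LEL_equiv_def
  by (rule LEL_propositional) (use assms in \<open>auto simp: LEL_equiv_def dest: LEL_wf\<close>)

lemma Conj_cong:
  assumes "\<phi> \<approx> \<phi>'" and "\<psi> \<approx> \<psi>'"
  shows "Conj \<phi> \<psi> \<approx> Conj \<phi>' \<psi>'"
  using assms unfolding LEL_equiv_def
  by (rule LEL_propositional) (use assms in \<open>auto simp: LEL_equiv_def dest: LEL_wf\<close>)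

lemma Or_cong:
  assumes "\<phi> \<approx> \<phi>'" and "\<psi> \<approx> \<psi>'"
  shows "Or \<phi> \<psi> \<approx> Or \<phi>' \<psi>'"
  using assms unfolding LEL_equiv_def
  by (rule LEL_propositional) (use assms in \<open>auto simp: LEL_equiv_def dest: LEL_wf\<close>)

subsection \<open>Assignment and knowledge modalities\<close>

lemma Asg_imp:
  assumes "LEL (Imp \<phi> \<psi>)"
  shows "LEL (Imp (Asg x a \<phi>) (Asg x a \<psi>))"
proof -
  have "wf \<phi>" "wf \<psi>"
    using LEL_wf[OF assms] by auto
  then have "LEL (Imp (Asg x a (Imp \<phi> \<psi>)) (Imp (Asg x a \<phi>) (Asg x a \<psi>)))"
    by (rule LEL.Asg_dist)
  moreover have "LEL (Asg x a (Imp \<phi> \<psi>))"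
    using assms by (rule LEL.Nec_Asg)
  ultimately show ?thesis
    by (rule LEL.MP)
qed

lemma Asg_cong: "\<phi> \<approx> \<psi> \<Longrightarrow> Asg x a \<phi> \<approx> Asg x a \<psi>"
  by (rule equivI; rule Asg_imp; erule equivD)

lemma Asg_Bot_imp: "wf \<phi> \<Longrightarrow> LEL (Imp (Asg x a Bot) (Asg x a \<phi>))"
  by (intro Asg_imp LEL_tautology) auto

lemma Asg_Conj:
  assumes "wf \<phi>" and "wf \<psi>"
  shows "Asg x a (Conj \<phi> \<psi>) \<approx> Conj (Asg x a \<phi>) (Asg x a \<psi>)"
proof -
  have "LEL (Imp (Asg x a (Conj \<phi> \<psi>)) (Asg x a \<phi>))"
    using assms by (intro Asg_imp LEL_tautology) auto
  moreover have "LEL (Imp (Asg x a (Conj \<phi> \<psi>)) (Asg x a \<psi>))"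
    using assms by (intro Asg_imp LEL_tautology) auto
  moreover have "LEL (Imp (Asg x a \<phi>) (Asg x a (Imp \<psi> (Conj \<phi> \<psi>))))"
    using assms by (intro Asg_imp LEL_tautology) auto
  moreover have "LEL (Imp (Asg x a (Imp \<psi> (Conj \<phi> \<psi>))) (Imp (Asg x a \<psi>) (Asg x a (Conj \<phi> \<psi>))))"
    using assms by (intro LEL.Asg_dist) auto
  ultimately show ?thesis
    unfolding LEL_equiv_def by (rule LEL_propositional) (use assms in auto)
qed

lemma Asg_Neg:
  assumes "wf \<phi>"
  shows "Asg x a (Neg \<phi>) \<approx> Or (Asg x a Bot) (Neg (Asg x a \<phi>))"
proof -
  have "Asg x a (Conj (Neg \<phi>) \<phi>) \<approx> Conj (Asg x a (Neg \<phi>)) (Asg x a \<phi>)"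
    using assms by (intro Asg_Conj) auto
  moreover have "LEL (Imp (Asg x a (Conj (Neg \<phi>) \<phi>)) (Asg x a Bot))"
    using assms by (intro Asg_imp LEL_tautology) auto
  moreover have "LEL (Imp (Asg x a Bot) (Asg x a (Neg \<phi>)))"
    using assms by (intro Asg_Bot_imp) auto
  moreover have "LEL (Imp (Neg (Asg x a (Neg (Neg \<phi>)))) (Asg x a (Neg \<phi>)))"
    using LEL.Asg_func[of "Neg \<phi>" x a] assms by (simp add: Dia_def)
  moreover have "LEL (Imp (Asg x a (Neg (Neg \<phi>))) (Asg x a \<phi>))"
    using assms by (intro Asg_imp LEL_tautology) auto
  ultimately show ?thesis
    unfolding LEL_equiv_def by (rule LEL_propositional) (use assms in auto)
qed

lemma Asg_Or:
  assumes "wf \<phi>" and "wf \<psi>"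
  shows "Asg x a (Or \<phi> \<psi>) \<approx> Or (Asg x a \<phi>) (Asg x a \<psi>)"
proof -
  have "Asg x a (Or \<phi> \<psi>) \<approx> Or (Asg x a Bot) (Neg (Asg x a (Conj (Neg \<phi>) (Neg \<psi>))))"
    unfolding Or_def[of \<phi> \<psi>] using assms by (intro Asg_Neg) auto
  moreover have "Asg x a (Conj (Neg \<phi>) (Neg \<psi>)) \<approx> Conj (Asg x a (Neg \<phi>)) (Asg x a (Neg \<psi>))"
    using assms by (intro Asg_Conj) auto
  moreover have "Asg x a (Neg \<phi>) \<approx> Or (Asg x a Bot) (Neg (Asg x a \<phi>))"
    using assms by (intro Asg_Neg)
  moreover have "Asg x a (Neg \<psi>) \<approx> Or (Asg x a Bot) (Neg (Asg x a \<psi>))"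
    using assms by (intro Asg_Neg)
  moreover have "LEL (Imp (Asg x a Bot) (Asg x a \<phi>))"
    using assms by (intro Asg_Bot_imp)
  ultimately show ?thesis
    unfolding LEL_equiv_def by (rule LEL_propositional) (use assms in auto)
qed

lemma Asg_vacuous:
  assumes "wf \<psi>" and "x \<notin> FV \<psi>"
  shows "Asg x a \<psi> \<approx> Or (Asg x a Bot) \<psi>"
proof -
  have "LEL (Imp (Neg \<psi>) (Asg x a (Neg \<psi>)))"
    using assms by (intro LEL.Asg_vac) auto
  moreover have "Asg x a (Neg \<psi>) \<approx> Or (Asg x a Bot) (Neg (Asg x a \<psi>))"
    using assms by (intro Asg_Neg)
  moreover have "LEL (Imp \<psi> (Asg x a \<psi>))"
    using assms by (intro LEL.Asg_vac)
  moreover have "LEL (Imp (Asg x a Bot) (Asg x a \<psi>))"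
    using assms by (intro Asg_Bot_imp)
  ultimately show ?thesis
    unfolding LEL_equiv_def by (rule LEL_propositional) (use assms in auto)
qed

lemma K_imp:
  assumes "LEL (Imp \<beta> \<gamma>)" and "sentence \<beta>" and "sentence \<gamma>" and "finite X"
  shows "LEL (Imp (K X \<beta>) (K X \<gamma>))"
proof -
  have "sentence (Imp \<beta> \<gamma>)"
    using assms by (auto simp: sentence_def)
  then have "LEL (Imp (K {} (Imp \<beta> \<gamma>)) (K X (Imp \<beta> \<gamma>)))"
    using assms by (intro LEL.K_mono) auto
  moreover have "LEL (K {} (Imp \<beta> \<gamma>))"
    using \<open>sentence (Imp \<beta> \<gamma>)\<close> assms(1) by (rule LEL.Nec_K)
  ultimately have "LEL (K X (Imp \<beta> \<gamma>))"
    by (rule LEL.MP)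
  moreover have "LEL (Imp (K X (Imp \<beta> \<gamma>)) (Imp (K X \<beta>) (K X \<gamma>)))"
    using assms by (intro LEL.K_dist)
  ultimately show ?thesis
    by (rule LEL.MP[rotated])
qed

lemma K_cong:
  "\<beta> \<approx> \<gamma> \<Longrightarrow> sentence \<beta> \<Longrightarrow> sentence \<gamma> \<Longrightarrow> finite X \<Longrightarrow> K X \<beta> \<approx> K X \<gamma>"
  by (rule equivI; rule K_imp; (erule equivD)?)

subsection \<open>Assignment prefixes\<close>

lemma Asg_list_cong: "\<phi> \<approx> \<psi> \<Longrightarrow> Asg_list \<sigma> \<phi> \<approx> Asg_list \<sigma> \<psi>"
  by (induction \<sigma> \<phi> rule: Asg_list.induct) (auto intro: Asg_cong)

lemma Asg_list_necessitation: "LEL \<phi> \<Longrightarrow> LEL (Asg_list \<sigma> \<phi>)"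
  by (induction \<sigma> \<phi> rule: Asg_list.induct) (auto intro: LEL.Nec_Asg)

lemma Asg_list_Top: "Asg_list \<sigma> Top \<approx> Top"
proof -
  have "LEL (Asg_list \<sigma> Top)"
    by (intro Asg_list_necessitation LEL_tautology) auto
  then show ?thesis
    unfolding LEL_equiv_def by (rule LEL_propositional) auto
qed

lemma Asg_list_Conj:
  assumes "wf \<phi>" and "wf \<psi>"
  shows "Asg_list \<sigma> (Conj \<phi> \<psi>) \<approx> Conj (Asg_list \<sigma> \<phi>) (Asg_list \<sigma> \<psi>)"
proof (induction \<sigma>)
  case Nil
  show ?case using assms by (simp add: equiv_refl)
next
  case (Cons yc \<sigma>)
  obtain y c where [simp]: "yc = (y, c)" by fastforce
  have "Asg_list (yc # \<sigma>) (Conj \<phi> \<psi>) \<approx> Asg y c (Conj (Asg_list \<sigma> \<phi>) (Asg_list \<sigma> \<psi>))"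
    using Cons.IH by (simp add: Asg_cong)
  also have "\<dots> \<approx> Conj (Asg_list (yc # \<sigma>) \<phi>) (Asg_list (yc # \<sigma>) \<psi>)"
    using assms by (simp add: Asg_Conj)
  finally show ?case .
qed

lemma Asg_list_Neg:
  assumes "wf \<phi>"
  shows "Asg_list \<sigma> (Neg \<phi>) \<approx> Or (Blocked \<sigma>) (Neg (Asg_list \<sigma> \<phi>))"
proof (induction \<sigma>)
  case Nil
  show ?case using assms by (intro equiv_by_tautology) auto
next
  case (Cons yc \<sigma>)
  obtain y c where [simp]: "yc = (y, c)" by fastforce
  have "Asg_list (yc # \<sigma>) (Neg \<phi>) \<approx> Asg y c (Or (Blocked \<sigma>) (Neg (Asg_list \<sigma> \<phi>)))"
    using Cons.IH by (simp add: Asg_cong)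
  also have "\<dots> \<approx> Or (Asg y c (Blocked \<sigma>)) (Asg y c (Neg (Asg_list \<sigma> \<phi>)))"
    using assms by (intro Asg_Or) auto
  also have "\<dots> \<approx> Or (Blocked (yc # \<sigma>)) (Or (Asg y c Bot) (Neg (Asg_list (yc # \<sigma>) \<phi>)))"
    using assms by (simp, intro Or_cong Asg_vacuous Asg_Neg) auto
  also have "\<dots> \<approx> Or (Blocked (yc # \<sigma>)) (Neg (Asg_list (yc # \<sigma>) \<phi>))"
    using assms by (intro equiv_by_tautology) auto
  finally show ?case .
qed

lemma Asg_list_vacuous:
  assumes "wf \<psi>" and "FV \<psi> \<inter> fst ` set \<sigma> = {}"
  shows "Asg_list \<sigma> \<psi> \<approx> Or (Blocked \<sigma>) \<psi>"
  using assms(2)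
proof (induction \<sigma>)
  case Nil
  show ?case using assms by (intro equiv_by_tautology) auto
next
  case (Cons yc \<sigma>)
  obtain y c where [simp]: "yc = (y, c)" by fastforce
  have "Asg_list (yc # \<sigma>) \<psi> \<approx> Asg y c (Or (Blocked \<sigma>) \<psi>)"
    using Cons by (simp add: Asg_cong)
  also have "\<dots> \<approx> Or (Asg y c Bot) (Or (Blocked \<sigma>) \<psi>)"
    using assms Cons.prems by (intro Asg_vacuous) auto
  also have "\<dots> \<approx> Or (Blocked (yc # \<sigma>)) \<psi>"
    using assms by (intro equiv_by_tautology) auto
  finally show ?case .
qed

text \<open>Only the innermost assignment to x matters for p_x.\<close>

lemma Asg_list_Pred:
  assumes "x \<in> fst ` set \<sigma>"
  shows "\<exists>\<gamma>. anf \<gamma> \<and> Asg_list \<sigma> (Pred q x) \<approx> \<gamma>"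
  using assms
proof (induction \<sigma>)
  case Nil
  then show ?case by simp
next
  case (Cons yc \<sigma>)
  obtain y c where [simp]: "yc = (y, c)" by fastforce
  show ?case
  proof (cases "x \<in> fst ` set \<sigma>")
    case True
    then obtain \<gamma> where "anf \<gamma>" and \<gamma>: "Asg_list \<sigma> (Pred q x) \<approx> \<gamma>"
      using Cons.IH by blast
    have "sentence \<gamma>"
      using \<open>anf \<gamma>\<close> by (rule anf_sentence)
    have "Asg_list (yc # \<sigma>) (Pred q x) \<approx> Asg y c \<gamma>"
      using \<gamma> by (simp add: Asg_cong)
    also have "\<dots> \<approx> Or (Asg y c Bot) \<gamma>"
      using \<open>sentence \<gamma>\<close> by (intro Asg_vacuous) (auto simp: sentence_def)
    finally show ?thesis
      using \<open>anf \<gamma>\<close> by (blast intro: anf_Or anf.intros)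
  next
    case False
    with Cons.prems have [simp]: "y = x" by simp
    have "Asg_list (yc # \<sigma>) (Pred q x) \<approx> Asg x c (Or (Blocked \<sigma>) (Pred q x))"
      using False by (simp add: Asg_cong Asg_list_vacuous)
    also have "\<dots> \<approx> Or (Asg x c (Blocked \<sigma>)) (Asg x c (Pred q x))"
      by (intro Asg_Or) auto
    also have "\<dots> \<approx> Or (Blocked (yc # \<sigma>)) (Asg x c (Pred q x))"
      by (simp, intro Or_cong Asg_vacuous equiv_refl) auto
    finally show ?thesis
      by (blast intro: anf_Or anf_Blocked anf.intros)
  qed
qed

lemma Asg_list_K:
  assumes "sentence \<gamma>" and "finite X"
  shows "Asg_list \<sigma> (K X \<gamma>) \<approx> Or (Blocked \<sigma>) (Asg_list (filter (\<lambda>yc. fst yc \<in> X) \<sigma>) (K X \<gamma>))"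
proof (induction \<sigma>)
  case Nil
  show ?case using assms by (intro equiv_by_tautology) (auto simp: sentence_def)
next
  case (Cons yc \<sigma>)
  obtain y c where [simp]: "yc = (y, c)" by fastforce
  let ?C = "Asg_list (filter (\<lambda>yc. fst yc \<in> X) \<sigma>) (K X \<gamma>)"
  have wf: "wf ?C"
    using assms by (simp add: sentence_def)
  have "Asg_list (yc # \<sigma>) (K X \<gamma>) \<approx> Asg y c (Or (Blocked \<sigma>) ?C)"
    using Cons.IH by (simp add: Asg_cong)
  also have "\<dots> \<approx> Or (Asg y c (Blocked \<sigma>)) (Asg y c ?C)"
    using wf by (intro Asg_Or) auto
  also have "\<dots> \<approx> Or (Blocked (yc # \<sigma>)) (Asg y c ?C)"
    using wf by (simp, intro Or_cong Asg_vacuous equiv_refl) auto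
  finally have pushed: "Asg_list (yc # \<sigma>) (K X \<gamma>) \<approx> Or (Blocked (yc # \<sigma>)) (Asg y c ?C)" .
  show ?case
  proof (cases "y \<in> X")
    case True
    with pushed show ?thesis by simp
  next
    case False
    note pushed
    also have "Or (Blocked (yc # \<sigma>)) (Asg y c ?C) \<approx> Or (Blocked (yc # \<sigma>)) (Or (Asg y c Bot) ?C)"
      using wf False by (simp add: Or_cong Asg_vacuous equiv_refl)
    also have "\<dots> \<approx> Or (Blocked (yc # \<sigma>)) ?C"
      using wf by (intro equiv_by_tautology) auto
    finally show ?thesis
      using False by simp
  qed
qed

lemma Asg_list_anf:
  assumes "wf \<phi>" and "FV \<phi> \<subseteq> fst ` set \<sigma>"
  shows "\<exists>\<gamma>. anf \<gamma> \<and> Asg_list \<sigma> \<phi> \<approx> \<gamma>"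
  using assms
proof (induction \<phi> arbitrary: \<sigma>)
  case (Pred q x)
  then show ?case by (simp add: Asg_list_Pred)
next
  case Top
  show ?case using Asg_list_Top anf.intros(3) by blast
next
  case (Neg \<phi>)
  then obtain \<gamma> where "anf \<gamma>" and \<gamma>: "Asg_list \<sigma> \<phi> \<approx> \<gamma>"
    by auto
  have "Asg_list \<sigma> (Neg \<phi>) \<approx> Or (Blocked \<sigma>) (Neg (Asg_list \<sigma> \<phi>))"
    using Neg.prems by (intro Asg_list_Neg) simp
  also have "\<dots> \<approx> Or (Blocked \<sigma>) (Neg \<gamma>)"
    using \<gamma> by (intro Or_cong Neg_cong equiv_refl) simp
  finally show ?case
    using \<open>anf \<gamma>\<close> by (blast intro: anf_Or anf_Blocked anf.intros)
next
  case (Conj \<phi> \<psi>)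
  then obtain \<gamma> \<delta> where "anf \<gamma>" "anf \<delta>"
    and \<gamma>: "Asg_list \<sigma> \<phi> \<approx> \<gamma>" and \<delta>: "Asg_list \<sigma> \<psi> \<approx> \<delta>"
    by force
  have "Asg_list \<sigma> (Conj \<phi> \<psi>) \<approx> Conj (Asg_list \<sigma> \<phi>) (Asg_list \<sigma> \<psi>)"
    using Conj.prems by (intro Asg_list_Conj) simp_all
  also have "\<dots> \<approx> Conj \<gamma> \<delta>"
    using \<gamma> \<delta> by (rule Conj_cong)
  finally show ?case
    using \<open>anf \<gamma>\<close> \<open>anf \<delta>\<close> by (blast intro: anf.intros)
next
  case (Asg x a \<phi>)
  then have "\<exists>\<gamma>. anf \<gamma> \<and> Asg_list (\<sigma> @ [(x, a)]) \<phi> \<approx> \<gamma>"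
    by (intro Asg.IH) auto
  then show ?case
    by (simp add: Asg_list_append)
next
  case (K X \<beta>)
  then have "finite X" and "sentence \<beta>"
    by (simp_all add: sentence_def)
  from K.IH[of "[]"] K.prems obtain \<gamma> where "anf \<gamma>" and \<gamma>: "\<beta> \<approx> \<gamma>"
    by auto
  have "sentence \<gamma>"
    using \<open>anf \<gamma>\<close> by (rule anf_sentence)
  let ?\<sigma>\<^sub>X = "filter (\<lambda>yc. fst yc \<in> X) \<sigma>"
  have "Asg_list \<sigma> (K X \<beta>) \<approx> Asg_list \<sigma> (K X \<gamma>)"
    using \<gamma> \<open>sentence \<beta>\<close> \<open>sentence \<gamma>\<close> \<open>finite X\<close> by (intro Asg_list_cong K_cong)
  also have "\<dots> \<approx> Or (Blocked \<sigma>) (Asg_list ?\<sigma>\<^sub>X (K X \<gamma>))"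
    using \<open>sentence \<gamma>\<close> \<open>finite X\<close> by (rule Asg_list_K)
  finally have "Asg_list \<sigma> (K X \<beta>) \<approx> Or (Blocked \<sigma>) (Asg_list ?\<sigma>\<^sub>X (K X \<gamma>))" .
  moreover have "fst ` set ?\<sigma>\<^sub>X = X"
    using K.prems by force
  ultimately show ?case
    using anf_Asg_list_K[OF \<open>anf \<gamma>\<close>, of ?\<sigma>\<^sub>X] by (metis anf_Or anf_Blocked)
qed

theorem proposition6:
  fixes \<alpha> :: "('a::finite, 'x::countable, 'p::countable) fm"
  assumes "sentence \<alpha>"
  shows "\<exists>\<gamma>. anf \<gamma> \<and> LEL (Iff \<alpha> \<gamma>)"
  using Asg_list_anf[of \<alpha> "[]"] assms by (simp add: sentence_def LEL_equiv_def)

end
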